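(* Let $V$ be a finite nonempty set and $ij\in P_V$. For every $x\in X_V$, the vector $x'\in\{0,1\}^{P_V}$ defined for all $pq\in P_V$ by $x'_{pq}=1$ if $x_{pi}=x_{jq}=1$, and $x'_{pq}=x_{pq}$ otherwise, satisfies $x'\in X_V$.
   Context: $P_V=\{pq\in V^2\mid p\neq q\}$. $X_V$ is the set of all $x\in\{0,1\}^{P_V}$ such that $x_{pq}+x_{qr}-x_{pr}\le 1$ for all pairwise distinct $p,q,r\in V$. Convention: for $x\in X_V$ and $a\in V$, $x_{aa}:=1$ (so, e.g., $x_{pi}=1$ holds when $p=i$). *)

theory Defs
  imports "HOL-Library.FuncSet"
begin

definition PV :: "'a set \<Rightarrow> ('a \<times> 'a) set" where
  "PV V = {(p, q). p \<in> V \<and> q \<in> V \<and> p \<noteq> q}"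

definition XV :: "'a set \<Rightarrow> (('a \<times> 'a) \<Rightarrow> int) set" where
  "XV V = {x \<in> PV V \<rightarrow>\<^sub>E {0, 1}.
            \<forall>p\<in>V. \<forall>q\<in>V. \<forall>r\<in>V. p \<noteq> q \<and> q \<noteq> r \<and> p \<noteq> r \<longrightarrow>
              x (p, q) + x (q, r) - x (p, r) \<le> 1}"

definition xv :: "(('a \<times> 'a) \<Rightarrow> int) \<Rightarrow> 'a \<Rightarrow> 'a \<Rightarrow> int" where
  "xv x a b = (if a = b then 1 else x (a, b))"

end

theory Submission
  imports Defs
begin

text \<open>Read \<open>xv x a b = 1\<close> as a relation on \<open>V\<close>. It is reflexive by convention, and for
  0/1 vectors the triangle inequalities defining \<open>X\<^sub>V\<close> say exactly that it is transitive.
  The vector \<open>x'\<close> encodes the old relation together with every pair \<open>pq\<close> with \<open>p\<close> related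
  to \<open>i\<close> and \<open>j\<close> related to \<open>q\<close>. Adding all such pairs keeps a transitive relation
  transitive.\<close>

lemma transp_on_sup_through:
  assumes "transp_on V R" and "i \<in> V" and "j \<in> V"
  shows "transp_on V (\<lambda>a b. (R a i \<and> R j b) \<or> R a b)"
proof (rule transp_onI)
  fix a b c assume "a \<in> V" "b \<in> V" "c \<in> V"
    and "(R a i \<and> R j b) \<or> R a b" and "(R b i \<and> R j c) \<or> R b c"
  then show "(R a i \<and> R j c) \<or> R a c"
    using transp_onD[OF assms(1)] assms(2,3) by blast
qed

lemma XV_iff_transp_on:
  "x \<in> XV V \<longleftrightarrow> x \<in> PV V \<rightarrow>\<^sub>E {0, 1} \<and> transp_on V (\<lambda>a b. xv x a b = 1)"
proof (cases "x \<in> PV V \<rightarrow>\<^sub>E {0, 1}")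
  case True
  then have x01: "x (a, b) \<in> {0, 1}" if "a \<in> V" "b \<in> V" "a \<noteq> b" for a b
    using that by (auto simp: PV_def)
  have triangle_iff:
    "x (p, q) + x (q, r) - x (p, r) \<le> 1 \<longleftrightarrow> (x (p, q) = 1 \<longrightarrow> x (q, r) = 1 \<longrightarrow> x (p, r) = 1)"
    if "p \<in> V" "q \<in> V" "r \<in> V" "p \<noteq> q" "q \<noteq> r" "p \<noteq> r" for p q r
    using x01[of p q] x01[of q r] x01[of p r] that by auto
  have "transp_on V (\<lambda>a b. xv x a b = 1) \<longleftrightarrow>
      (\<forall>p\<in>V. \<forall>q\<in>V. \<forall>r\<in>V. p \<noteq> q \<and> q \<noteq> r \<and> p \<noteq> r \<longrightarrow> x (p, q) = 1 \<longrightarrow> x (q, r) = 1 \<longrightarrow> x (p, r) = 1)"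
    unfolding transp_on_def xv_def by (intro iffI ballI impI; simp; metis)
  with True triangle_iff show ?thesis
    unfolding XV_def by auto
qed (simp add: XV_def)

theorem lemma5p4:
  fixes V :: "'a set" and i j :: 'a and x :: "('a \<times> 'a) \<Rightarrow> int"
  assumes "finite V" and "V \<noteq> {}"
    and "(i, j) \<in> PV V"
    and "x \<in> XV V"
  shows "(\<lambda>pq\<in>PV V. if xv x (fst pq) i = 1 \<and> xv x j (snd pq) = 1 then 1 else x pq) \<in> XV V"
proof -
  define x' where
    "x' = (\<lambda>pq\<in>PV V. if xv x (fst pq) i = 1 \<and> xv x j (snd pq) = 1 then 1 else x pq)"
  have ij: "i \<in> V" "j \<in> V"
    using assms(3) by (auto simp: PV_def)
  from assms(4) have x01: "x \<in> PV V \<rightarrow>\<^sub>E {0, 1}" and trans: "transp_on V (\<lambda>a b. xv x a b = 1)"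
    by (simp_all add: XV_iff_transp_on)
  have "x' \<in> PV V \<rightarrow>\<^sub>E {0, 1}"
    using x01 by (auto simp: x'_def PiE_iff)
  moreover have "xv x' a b = 1 \<longleftrightarrow> (xv x a i = 1 \<and> xv x j b = 1) \<or> xv x a b = 1"
    if "a \<in> V" "b \<in> V" for a b
    using that by (auto simp: x'_def xv_def PV_def)
  then have "transp_on V (\<lambda>a b. xv x' a b = 1)"
    using transp_on_sup_through[OF trans ij] by (simp add: transp_on_def)
  ultimately show ?thesis
    by (simp add: XV_iff_transp_on x'_def)
qed

end
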